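(* Let $\mathcal G$ be an étale groupoid and $K$ a compact subset of $\mathcal G$. Regard $\mathcal G$ as a left $\mathcal G$-space via multiplication (anchor map $r$), and let \[\Delta_K(\mathcal G)=\{\delta\subseteq\mathcal G\text{ finite nonempty}:\forall\gamma_1,\gamma_2\in\delta,\ r(\gamma_1)=r(\gamma_2),\ \gamma_1^{-1}\gamma_2\in K\}.\] Then (1) $(\mathcal G,\Delta_K(\mathcal G))$ is a finite-dimensional $\mathcal G$-simplicial complex; (2) it satisfies hypotheses $(H_1)$ and $(H_2)$; (3) it is proper and $\mathcal G$-compact.
   Context: Étale groupoids are locally compact Hausdorff with range map a local homeomorphism. A $\mathcal G$-simplicial complex is a pair $(Y,\Delta)$ with $Y$ a locally compact Hausdorff left $\mathcal G$-space whose anchor $\rho$ is a local homeomorphism, and $\Delta$ a family of finite nonempty subsets of $Y$, each contained in a fibre of $\rho$, closed under nonempty subsets and under $\delta\mapsto\gamma\delta$ (for $\delta\subseteq\rho^{-1}(s(\gamma))$); it is finite-dimensional if the cardinalities of elements of $\Delta$ are bounded. $(H_1)$: for every compact $K'\subseteq Y$, $\{y:\exists y'\in K',\{y,y'\}\in\Delta\}$ is compact. $(H_2)$: if nets $(y^{(i)}_\lambda)_\lambda$ converge to $y^{(i)}$ ($0\le i\le k$) and $\{y^{(0)}_\lambda,\dots,y^{(k)}_\lambda\}\in\Delta$ for all $\lambda$, then $\{y^{(0)},\dots,y^{(k)}\}\in\Delta$. $(Y,\Delta)$ is proper if the action on $Y$ is proper, and $\mathcal G$-compact if $\{y:\{y\}\in\Delta\}$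 equals $\mathcal GC$ for some compact $C$. *)

theory Defs
  imports "HOL-Analysis.Analysis"
begin

text \<open>A groupoid whose set of arrows is the whole type 'g.  It is given by
source s, range r, partial multiplication m (a b is defined iff s a = r b)
and inverse i.  Units are the arrows u with r u = u.\<close>

definition groupoid ::
  "('g \<Rightarrow> 'g) \<Rightarrow> ('g \<Rightarrow> 'g) \<Rightarrow> ('g \<Rightarrow> 'g \<Rightarrow> 'g) \<Rightarrow> ('g \<Rightarrow> 'g) \<Rightarrow> bool" where
  "groupoid s r m i \<longleftrightarrow>
     (\<forall>x. s (r x) = r x \<and> r (s x) = s x) \<and>
     (\<forall>a b. s a = r b \<longrightarrow> r (m a b) = r a \<and> s (m a b) = s b) \<and>
     (\<forall>a b c. s a = r b \<and> s b = r c \<longrightarrow> m (m a b) c = m a (m b c)) \<and>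
     (\<forall>a. m (r a) a = a \<and> m a (s a) = a) \<and>
     (\<forall>a. s (i a) = r a \<and> r (i a) = s a \<and> m a (i a) = r a \<and> m (i a) a = s a)"

definition units :: "('g \<Rightarrow> 'g) \<Rightarrow> 'g set" where
  "units r = {u. r u = u}"

definition local_homeo :: "('a::topological_space \<Rightarrow> 'b::topological_space) \<Rightarrow> 'a set \<Rightarrow> 'b set \<Rightarrow> bool" where
  "local_homeo f X T \<longleftrightarrow> f ` X \<subseteq> T \<and>
     (\<forall>x\<in>X. \<exists>U. openin (top_of_set X) U \<and> x \<in> U \<and> openin (top_of_set T) (f ` U) \<and>
                 (\<exists>g. homeomorphism U (f ` U) f g))"

definition etale_groupoid ::
  "('g::t2_space \<Rightarrow> 'g) \<Rightarrow> ('g \<Rightarrow> 'g) \<Rightarrow> ('g \<Rightarrow> 'g \<Rightarrow> 'g) \<Rightarrow> ('g \<Rightarrow> 'g) \<Rightarrow> bool" where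
  "etale_groupoid s r m i \<longleftrightarrow>
     groupoid s r m i \<and>
     locally compact (UNIV :: 'g set) \<and>
     continuous_on UNIV s \<and> continuous_on UNIV r \<and> continuous_on UNIV i \<and>
     continuous_on {(a, b). s a = r b} (\<lambda>(a, b). m a b) \<and>
     local_homeo r UNIV (units r)"

definition G_space ::
  "('g::t2_space \<Rightarrow> 'g) \<Rightarrow> ('g \<Rightarrow> 'g) \<Rightarrow> ('g \<Rightarrow> 'g \<Rightarrow> 'g) \<Rightarrow> ('g \<Rightarrow> 'g)
   \<Rightarrow> ('g \<Rightarrow> 'y::t2_space \<Rightarrow> 'y) \<Rightarrow> ('y \<Rightarrow> 'g) \<Rightarrow> bool" where
  "G_space s r m i act \<rho> \<longleftrightarrow>
     locally compact (UNIV :: 'y set) \<and>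
     (\<forall>y. \<rho> y \<in> units r) \<and>
     (\<forall>g y. s g = \<rho> y \<longrightarrow> \<rho> (act g y) = r g) \<and>
     (\<forall>y. act (\<rho> y) y = y) \<and>
     (\<forall>g h y. s g = r h \<and> s h = \<rho> y \<longrightarrow> act (m g h) y = act g (act h y)) \<and>
     continuous_on UNIV \<rho> \<and>
     continuous_on {(g, y). s g = \<rho> y} (\<lambda>(g, y). act g y) \<and>
     local_homeo \<rho> UNIV (units r)"

definition G_simplicial_complex ::
  "('g::t2_space \<Rightarrow> 'g) \<Rightarrow> ('g \<Rightarrow> 'g) \<Rightarrow> ('g \<Rightarrow> 'g \<Rightarrow> 'g) \<Rightarrow> ('g \<Rightarrow> 'g)
   \<Rightarrow> ('g \<Rightarrow> 'y::t2_space \<Rightarrow> 'y) \<Rightarrow> ('y \<Rightarrow> 'g) \<Rightarrow> 'y set set \<Rightarrow> bool" where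
  "G_simplicial_complex s r m i act \<rho> \<Delta> \<longleftrightarrow>
     G_space s r m i act \<rho> \<and>
     (\<forall>\<delta>\<in>\<Delta>. finite \<delta> \<and> \<delta> \<noteq> {} \<and> (\<exists>u. \<forall>y\<in>\<delta>. \<rho> y = u)) \<and>
     (\<forall>\<delta>\<in>\<Delta>. \<forall>\<delta>'. \<delta>' \<subseteq> \<delta> \<and> \<delta>' \<noteq> {} \<longrightarrow> \<delta>' \<in> \<Delta>) \<and>
     (\<forall>\<delta>\<in>\<Delta>. \<forall>g. (\<forall>y\<in>\<delta>. \<rho> y = s g) \<longrightarrow> act g ` \<delta> \<in> \<Delta>)"

definition finite_dimensional :: "'y set set \<Rightarrow> bool" where
  "finite_dimensional \<Delta> \<longleftrightarrow> (\<exists>n::nat. \<forall>\<delta>\<in>\<Delta>. card \<delta> \<le> n)"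

definition H1 :: "'y::topological_space set set \<Rightarrow> bool" where
  "H1 \<Delta> \<longleftrightarrow> (\<forall>K'. compact K' \<longrightarrow> compact {y. \<exists>y'\<in>K'. {y, y'} \<in> \<Delta>})"

text \<open>(H2), with nets represented as functions on an index type 'i converging
along a proper filter F on 'i (the filter of tails of a net); the index type is
passed explicitly.\<close>
definition H2 :: "'i itself \<Rightarrow> 'y::topological_space set set \<Rightarrow> bool" where
  "H2 _ \<Delta> \<longleftrightarrow>
     (\<forall>(k::nat) (F::'i filter) (f::'i \<Rightarrow> nat \<Rightarrow> 'y) (y::nat \<Rightarrow> 'y).
        F \<noteq> bot \<and> (\<forall>j\<le>k. ((\<lambda>l. f l j) \<longlongrightarrow> y j) F) \<and> (\<forall>l. f l ` {..k} \<in> \<Delta>)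
        \<longrightarrow> y ` {..k} \<in> \<Delta>)"

definition proper_action ::
  "('g::topological_space \<Rightarrow> 'g) \<Rightarrow> ('g \<Rightarrow> 'y::topological_space \<Rightarrow> 'y) \<Rightarrow> ('y \<Rightarrow> 'g) \<Rightarrow> bool" where
  "proper_action s act \<rho> \<longleftrightarrow>
     (\<forall>C :: ('y \<times> 'y) set. compact C \<longrightarrow>
        compact {(g, y). s g = \<rho> y \<and> (act g y, y) \<in> C})"

definition G_compact ::
  "('g \<Rightarrow> 'g) \<Rightarrow> ('g \<Rightarrow> 'y::topological_space \<Rightarrow> 'y) \<Rightarrow> ('y \<Rightarrow> 'g) \<Rightarrow> 'y set set \<Rightarrow> bool" where
  "G_compact s act \<rho> \<Delta> \<longleftrightarrow>
     (\<exists>C. compact C \<and> {y. {y} \<in> \<Delta>} = {act g c |g c. c \<in> C \<and> s g = \<rho> c})"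

definition Delta_K :: "('g \<Rightarrow> 'g) \<Rightarrow> ('g \<Rightarrow> 'g \<Rightarrow> 'g) \<Rightarrow> ('g \<Rightarrow> 'g) \<Rightarrow> 'g set \<Rightarrow> 'g set set" where
  "Delta_K r m i K = {\<delta>. finite \<delta> \<and> \<delta> \<noteq> {} \<and>
      (\<forall>a\<in>\<delta>. \<forall>b\<in>\<delta>. r a = r b \<and> m (i a) b \<in> K)}"

end

theory Submission imports Defs begin

text \<open>Delta_K is the flag complex of the relation a ~ b iff r a = r b and a^-1 b \<in> K.
Left translation preserves a^-1 b, so the complex is invariant, and the relation is closed
because K is, which gives (H2). Translating a simplex by a^-1 for one of its vertices a maps it
injectively into the fibre of r over s a inside K; these fibres have bounded size because r is
locally injective and K is compact. The neighbours of a compact set K' are the products a k with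
a \<in> K', k \<in> K subject to closed conditions, hence a continuous image of a compact set (H1).
The action is proper because (g, y) \<mapsto> (g y, y) has the continuous inverse
(x, y) \<mapsto> (x y^-1, y) on pairs with equal source, and the vertices are the arrows with source
in K, i.e. the orbit of K \<inter> units r.\<close>

lemma local_homeo_locally_injective:
  assumes "local_homeo f UNIV T"
  obtains U where "open U" "x \<in> U" "inj_on f U"
proof -
  obtain U g where U: "openin (top_of_set UNIV) U" "x \<in> U" "homeomorphism U (f ` U) f g"
    using assms unfolding local_homeo_def by blast
  have "inj_on f U"
    using U(3) unfolding homeomorphism_def by (intro inj_on_inverseI[where g = g]) blast
  with U show ?thesis
    using that by simp
qed

lemma locally_injective_compact_fibres_bounded:
  assumes locally_injective: "\<And>x. \<exists>U. open U \<and> x \<in> U \<and> inj_on f U" and "compact K"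
  obtains N where "\<And>u. finite (K \<inter> f -` {u})" "\<And>u. card (K \<inter> f -` {u}) \<le> N"
proof -
  have cover: "K \<subseteq> \<Union>{U. open U \<and> inj_on f U}"
    using locally_injective by blast
  obtain \<U> where \<U>: "\<U> \<subseteq> {U. open U \<and> inj_on f U}" "finite \<U>" "K \<subseteq> \<Union>\<U>"
    by (rule compactE[OF \<open>compact K\<close> cover]) simp_all
  have fibre_eq: "K \<inter> f -` {u} = (\<Union>U\<in>\<U>. U \<inter> K \<inter> f -` {u})" for u
    using \<U>(3) by blast
  have piece: "finite (U \<inter> K \<inter> f -` {u}) \<and> card (U \<inter> K \<inter> f -` {u}) \<le> 1"
    if "U \<in> \<U>" for U u
  proof -
    have "inj_on f U"
      using \<U>(1) that by blast
    then have "inj_on f (U \<inter> K \<inter> f -` {u})"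
      by (rule inj_on_subset) blast
    moreover have "f ` (U \<inter> K \<inter> f -` {u}) \<subseteq> {u}"
      by blast
    ultimately show ?thesis
      using inj_on_finite[of f _ "{u}"] card_inj_on_le[of f _ "{u}"] by simp
  qed
  have "finite (K \<inter> f -` {u})" for u
    unfolding fibre_eq using \<U>(2) piece by (intro finite_UN_I) auto
  moreover have "card (K \<inter> f -` {u}) \<le> card \<U>" for u
  proof -
    have "card (K \<inter> f -` {u}) \<le> (\<Sum>U\<in>\<U>. card (U \<inter> K \<inter> f -` {u}))"
      unfolding fibre_eq using \<U>(2) by (rule card_UN_le)
    also have "\<dots> \<le> card \<U>"
      using sum_bounded_above[of \<U> "\<lambda>U. card (U \<inter> K \<inter> f -` {u})" 1] piece by simp
    finally show ?thesis .
  qed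
  ultimately show ?thesis
    using that by blast
qed

definition flag_complex :: "('y \<times> 'y) set \<Rightarrow> 'y set set" where
  "flag_complex R = {\<delta>. finite \<delta> \<and> \<delta> \<noteq> {} \<and> (\<forall>a\<in>\<delta>. \<forall>b\<in>\<delta>. (a, b) \<in> R)}"

lemma flag_complex_subset:
  "\<delta> \<in> flag_complex R \<Longrightarrow> \<delta>' \<subseteq> \<delta> \<Longrightarrow> \<delta>' \<noteq> {} \<Longrightarrow> \<delta>' \<in> flag_complex R"
  unfolding flag_complex_def by (auto intro: finite_subset)

lemma H2_flag_complex:
  fixes R :: "('y::topological_space \<times> 'y) set"
  assumes "closed R"
  shows "H2 TYPE('i) (flag_complex R)"
  unfolding H2_def
proof (intro allI impI, elim conjE)
  fix k :: nat and F :: "'i filter" and f :: "'i \<Rightarrow> nat \<Rightarrow> 'y" and y :: "nat \<Rightarrow> 'y"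
  assume "F \<noteq> bot" and lim: "\<forall>j\<le>k. ((\<lambda>l. f l j) \<longlongrightarrow> y j) F"
    and simplices: "\<forall>l. f l ` {..k} \<in> flag_complex R"
  have "(y a, y b) \<in> R" if "a \<le> k" "b \<le> k" for a b
  proof (rule Lim_in_closed_set[OF \<open>closed R\<close> _ \<open>F \<noteq> bot\<close>])
    show "((\<lambda>l. (f l a, f l b)) \<longlongrightarrow> (y a, y b)) F"
      using lim that by (intro tendsto_Pair) auto
    show "\<forall>\<^sub>F l in F. (f l a, f l b) \<in> R"
      using simplices that unfolding flag_complex_def by simp
  qed
  then show "y ` {..k} \<in> flag_complex R"
    unfolding flag_complex_def by auto
qed

locale groupoid_laws =
  fixes s r :: "'g \<Rightarrow> 'g" and m :: "'g \<Rightarrow> 'g \<Rightarrow> 'g" and i :: "'g \<Rightarrow> 'g"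
  assumes groupoid: "groupoid s r m i"
begin

lemma s_r [simp]: "s (r x) = r x"
  and r_s [simp]: "r (s x) = s x"
  and r_mult: "s a = r b \<Longrightarrow> r (m a b) = r a"
  and s_mult: "s a = r b \<Longrightarrow> s (m a b) = s b"
  and mult_assoc: "s a = r b \<Longrightarrow> s b = r c \<Longrightarrow> m (m a b) c = m a (m b c)"
  and mult_r_left [simp]: "m (r a) a = a"
  and mult_s_right [simp]: "m a (s a) = a"
  and s_inv [simp]: "s (i a) = r a"
  and r_inv [simp]: "r (i a) = s a"
  and mult_inv_right [simp]: "m a (i a) = r a"
  and mult_inv_left [simp]: "m (i a) a = s a"
  using groupoid unfolding groupoid_def by auto

lemma r_r [simp]: "r (r x) = r x"
  by (metis s_r r_s)

lemma inv_mult_cancel_left: "s a = r b \<Longrightarrow> m (i a) (m a b) = b"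
  by (metis mult_assoc mult_inv_left r_inv s_inv r_mult mult_r_left)

lemma mult_inv_cancel_left: "r a = r b \<Longrightarrow> m a (m (i a) b) = b"
  by (metis mult_assoc mult_inv_right r_inv s_inv mult_r_left)

lemma inv_inv [simp]: "i (i a) = a"
  by (metis mult_inv_cancel_left mult_s_right r_inv s_inv mult_inv_right)

lemma inv_mult: "s a = r b \<Longrightarrow> i (m a b) = m (i b) (i a)"
  by (metis inv_mult_cancel_left mult_assoc r_inv s_inv r_mult s_mult mult_inv_right inv_inv)

lemma inv_mult_translate:
  assumes "s g = r a" and "s g = r b"
  shows "m (i (m g a)) (m g b) = m (i a) b"
proof -
  have "m (i (m g a)) (m g b) = m (m (i a) (i g)) (m g b)"
    using assms(1) by (simp add: inv_mult)
  also have "\<dots> = m (i a) (m (i g) (m g b))"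
    using assms by (simp add: mult_assoc r_mult)
  also have "\<dots> = m (i a) b"
    using assms(2) by (simp add: inv_mult_cancel_left)
  finally show ?thesis .
qed

lemma inv_mult_mult_left: "s a = r b \<Longrightarrow> m (i (m a b)) a = i b"
  by (metis inv_mult mult_assoc mult_inv_left mult_s_right r_inv s_inv)

end

lemma Delta_K_eq_flag_complex:
  "Delta_K r m i K = flag_complex {(a, b). r a = r b \<and> m (i a) b \<in> K}"
  unfolding Delta_K_def flag_complex_def by simp

lemma mem_Delta_K:
  "\<delta> \<in> Delta_K r m i K \<longleftrightarrow>
     finite \<delta> \<and> \<delta> \<noteq> {} \<and> (\<forall>a\<in>\<delta>. \<forall>b\<in>\<delta>. r a = r b \<and> m (i a) b \<in> K)"
  unfolding Delta_K_def by simp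

context groupoid_laws
begin

lemma Delta_K_translate:
  assumes "\<delta> \<in> Delta_K r m i K" and "\<forall>y\<in>\<delta>. r y = s g"
  shows "m g ` \<delta> \<in> Delta_K r m i K"
  using assms unfolding mem_Delta_K by (auto simp: r_mult inv_mult_translate)

lemma card_Delta_K_le:
  assumes "\<delta> \<in> Delta_K r m i K" and "a \<in> \<delta>" and "finite (K \<inter> r -` {s a})"
  shows "card \<delta> \<le> card (K \<inter> r -` {s a})"
proof (rule card_inj_on_le[OF _ _ assms(3)])
  have fibre: "r a = r b" "m (i a) b \<in> K" if "b \<in> \<delta>" for b
    using assms(1,2) that unfolding mem_Delta_K by blast+
  show "inj_on (m (i a)) \<delta>"
  proof (rule inj_onI)
    fix b c assume "b \<in> \<delta>" "c \<in> \<delta>" "m (i a) b = m (i a) c"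
    then show "b = c"
      using fibre mult_inv_cancel_left by metis
  qed
  show "m (i a) ` \<delta> \<subseteq> K \<inter> r -` {s a}"
    using fibre by (auto simp: r_mult)
qed

lemma singleton_Delta_K_iff: "{y} \<in> Delta_K r m i K \<longleftrightarrow> s y \<in> K"
  unfolding mem_Delta_K by simp

lemma pair_Delta_K_iff:
  assumes "s a = r k"
  shows "{m a k, a} \<in> Delta_K r m i K \<longleftrightarrow> k \<in> K \<and> i k \<in> K \<and> s a \<in> K \<and> s k \<in> K"
  using assms unfolding mem_Delta_K
  by (auto simp: r_mult s_mult inv_mult_cancel_left inv_mult_mult_left)

lemma Delta_K_neighbours_eq:
  "{y. \<exists>y'\<in>K'. {y, y'} \<in> Delta_K r m i K}
     = (\<lambda>(a, k). m a k) ` {(a, k) \<in> K' \<times> K. s a = r k \<and> i k \<in> K \<and> s a \<in> K \<and> s k \<in> K}"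
    (is "?N = (\<lambda>(a, k). m a k) ` ?T")
proof (intro equalityI subsetI)
  fix y assume "y \<in> ?N"
  then obtain a where a: "a \<in> K'" "{y, a} \<in> Delta_K r m i K" by blast
  define k where "k = m (i a) y"
  have "r a = r y"
    using a(2) unfolding mem_Delta_K by blast
  then have y: "y = m a k" and ak: "s a = r k"
    unfolding k_def by (simp_all add: mult_inv_cancel_left r_mult)
  have "(a, k) \<in> ?T"
    using a ak pair_Delta_K_iff[OF ak] unfolding y by simp
  then show "y \<in> (\<lambda>(a, k). m a k) ` ?T"
    unfolding y by (rule rev_image_eqI) simp
next
  fix y assume "y \<in> (\<lambda>(a, k). m a k) ` ?T"
  then obtain a k where "y = m a k" and ak: "(a, k) \<in> ?T" by auto
  then have "{y, a} \<in> Delta_K r m i K"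
    using pair_Delta_K_iff[of a k K] by auto
  with ak show "y \<in> ?N" by auto
qed

end

locale etale =
  fixes s r :: "'g::t2_space \<Rightarrow> 'g" and m :: "'g \<Rightarrow> 'g \<Rightarrow> 'g" and i :: "'g \<Rightarrow> 'g"
  assumes etale_groupoid: "etale_groupoid s r m i"
begin

sublocale groupoid_laws s r m i
  using etale_groupoid unfolding etale_groupoid_def by unfold_locales blast

lemma locally_compact: "locally compact (UNIV :: 'g set)"
  and continuous_on_s: "continuous_on UNIV s"
  and continuous_on_r: "continuous_on UNIV r"
  and continuous_on_i: "continuous_on UNIV i"
  and continuous_on_mult: "continuous_on {(a, b). s a = r b} (\<lambda>(a, b). m a b)"
  and local_homeo_r: "local_homeo r UNIV (units r)"
  using etale_groupoid unfolding etale_groupoid_def by blast+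

lemma continuous_on_s_compose [continuous_intros]:
  "continuous_on A f \<Longrightarrow> continuous_on A (\<lambda>x. s (f x))"
  by (rule continuous_on_compose2[OF continuous_on_s]) auto

lemma continuous_on_r_compose [continuous_intros]:
  "continuous_on A f \<Longrightarrow> continuous_on A (\<lambda>x. r (f x))"
  by (rule continuous_on_compose2[OF continuous_on_r]) auto

lemma continuous_on_i_compose [continuous_intros]:
  "continuous_on A f \<Longrightarrow> continuous_on A (\<lambda>x. i (f x))"
  by (rule continuous_on_compose2[OF continuous_on_i]) auto

lemma continuous_on_mult_compose [continuous_intros]:
  assumes "continuous_on A f" "continuous_on A g" "\<And>x. x \<in> A \<Longrightarrow> s (f x) = r (g x)"
  shows "continuous_on A (\<lambda>x. m (f x) (g x))"
  using continuous_on_compose2[OF continuous_on_mult continuous_on_Pair[OF assms(1,2)]] assms(3)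
  by auto

lemma G_space_mult: "G_space s r m i m r"
  unfolding G_space_def
  using locally_compact continuous_on_r continuous_on_mult local_homeo_r
  by (auto simp: units_def r_mult mult_assoc)

lemma Delta_K_G_simplicial_complex: "G_simplicial_complex s r m i m r (Delta_K r m i K)"
  unfolding G_simplicial_complex_def
proof (intro conjI)
  show "G_space s r m i m r"
    by (rule G_space_mult)
  show "\<forall>\<delta>\<in>Delta_K r m i K. finite \<delta> \<and> \<delta> \<noteq> {} \<and> (\<exists>u. \<forall>y\<in>\<delta>. r y = u)"
  proof
    fix \<delta> assume "\<delta> \<in> Delta_K r m i K"
    then show "finite \<delta> \<and> \<delta> \<noteq> {} \<and> (\<exists>u. \<forall>y\<in>\<delta>. r y = u)"
      unfolding mem_Delta_K by blast
  qed
  show "\<forall>\<delta>\<in>Delta_K r m i K. \<forall>\<delta>'. \<delta>' \<subseteq> \<delta> \<and> \<delta>' \<noteq> {} \<longrightarrow> \<delta>' \<in> Delta_K r m i K"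
    unfolding Delta_K_eq_flag_complex by (blast intro: flag_complex_subset)
  show "\<forall>\<delta>\<in>Delta_K r m i K. \<forall>g. (\<forall>y\<in>\<delta>. r y = s g) \<longrightarrow> m g ` \<delta> \<in> Delta_K r m i K"
    by (blast intro: Delta_K_translate)
qed

lemma Delta_K_finite_dimensional:
  assumes "compact K"
  shows "finite_dimensional (Delta_K r m i K)"
proof -
  obtain N where "\<And>u. finite (K \<inter> r -` {u})" "\<And>u. card (K \<inter> r -` {u}) \<le> N"
    using locally_injective_compact_fibres_bounded[OF _ assms]
      local_homeo_locally_injective[OF local_homeo_r] by metis
  then have "card \<delta> \<le> N" if "\<delta> \<in> Delta_K r m i K" "a \<in> \<delta>" for \<delta> a
    using card_Delta_K_le[OF that] le_trans by blast
  then show ?thesis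
    unfolding finite_dimensional_def by (metis card.empty ex_in_conv zero_le)
qed

lemma Delta_K_H1:
  assumes "compact K"
  shows "H1 (Delta_K r m i K)"
  unfolding H1_def
proof (intro allI impI)
  fix K' :: "'g set" assume "compact K'"
  let ?T = "{(a, k) \<in> K' \<times> K. s a = r k \<and> i k \<in> K \<and> s a \<in> K \<and> s k \<in> K}"
  have "closed ({p. s (fst p) = r (snd p)} \<inter> (\<lambda>p. i (snd p)) -` K
           \<inter> (\<lambda>p. s (fst p)) -` K \<inter> (\<lambda>p. s (snd p)) -` K)"
    using compact_imp_closed[OF assms]
    by (intro closed_Int closed_Collect_eq closed_vimage continuous_intros)
  moreover have "?T = (K' \<times> K) \<inter> ({p. s (fst p) = r (snd p)} \<inter> (\<lambda>p. i (snd p)) -` K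
           \<inter> (\<lambda>p. s (fst p)) -` K \<inter> (\<lambda>p. s (snd p)) -` K)"
    by auto
  ultimately have "compact ?T"
    using compact_Times[OF \<open>compact K'\<close> assms] by (simp add: compact_Int_closed)
  moreover have "continuous_on ?T (\<lambda>(a, k). m a k)"
    by (rule continuous_on_subset[OF continuous_on_mult]) auto
  ultimately show "compact {y. \<exists>y'\<in>K'. {y, y'} \<in> Delta_K r m i K}"
    unfolding Delta_K_neighbours_eq by (rule compact_continuous_image[rotated])
qed

lemma closed_Delta_K_relation:
  assumes "closed K"
  shows "closed {(a, b). r a = r b \<and> m (i a) b \<in> K}"
proof -
  let ?S = "{p. r (fst p) = r (snd p)}"
  have "closed ?S"
    by (intro closed_Collect_eq continuous_intros)
  moreover have "continuous_on ?S (\<lambda>p. m (i (fst p)) (snd p))"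
    by (intro continuous_intros) auto
  ultimately have "closed (?S \<inter> (\<lambda>p. m (i (fst p)) (snd p)) -` K)"
    using assms by (intro continuous_closed_preimage)
  moreover have "?S \<inter> (\<lambda>p. m (i (fst p)) (snd p)) -` K = {(a, b). r a = r b \<and> m (i a) b \<in> K}"
    by auto
  ultimately show ?thesis
    by simp
qed

lemma Delta_K_H2:
  assumes "closed K"
  shows "H2 TYPE('i) (Delta_K r m i K)"
  unfolding Delta_K_eq_flag_complex
  using closed_Delta_K_relation[OF assms] by (rule H2_flag_complex)

lemma proper_action_mult: "proper_action s m r"
  unfolding proper_action_def
proof (intro allI impI)
  fix C :: "('g \<times> 'g) set" assume "compact C"
  let ?D = "{p. s (fst p) = s (snd p)}"
  let ?\<phi> = "\<lambda>p. (m (fst p) (i (snd p)), snd p)"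
  have "closed ?D"
    by (intro closed_Collect_eq continuous_intros)
  moreover have "continuous_on ?D ?\<phi>"
    by (intro continuous_intros) auto
  moreover have "{(g, y). s g = r y \<and> (m g y, y) \<in> C} = ?\<phi> ` (C \<inter> ?D)"
  proof (intro equalityI subsetI)
    fix p assume "p \<in> {(g, y). s g = r y \<and> (m g y, y) \<in> C}"
    then obtain g y where p: "p = (g, y)" "s g = r y" "(m g y, y) \<in> C"
      by blast
    have "s (m g y) = s y" "m (m g y) (i y) = g"
      using p(2)[symmetric] by (simp_all add: s_mult mult_assoc)
    with p show "p \<in> ?\<phi> ` (C \<inter> ?D)"
      by (auto intro!: rev_image_eqI[of "(m g y, y)"])
  next
    fix p assume "p \<in> ?\<phi> ` (C \<inter> ?D)"
    then obtain x y where xy: "(x, y) \<in> C" "s x = s y" "p = (m x (i y), y)"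
      by auto
    have "s (m x (i y)) = r y" "m (m x (i y)) y = x"
      using xy(2)[symmetric] by (simp_all add: s_mult mult_assoc)
    with xy show "p \<in> {(g, y). s g = r y \<and> (m g y, y) \<in> C}"
      by simp
  qed
  ultimately show "compact {(g, y). s g = r y \<and> (m g y, y) \<in> C}"
    using \<open>compact C\<close>
    by (auto intro: compact_continuous_image continuous_on_subset compact_Int_closed)
qed

lemma Delta_K_G_compact:
  assumes "compact K"
  shows "G_compact s m r (Delta_K r m i K)"
  unfolding G_compact_def
proof (intro exI conjI)
  have "closed (units r)"
    unfolding units_def by (intro closed_Collect_eq continuous_intros)
  then show "compact (K \<inter> units r)"
    by (rule compact_Int_closed[OF assms])
  show "{y. {y} \<in> Delta_K r m i K} = {m g c |g c. c \<in> K \<inter> units r \<and> s g = r c}"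
  proof (intro equalityI subsetI)
    fix y assume "y \<in> {y. {y} \<in> Delta_K r m i K}"
    then have "s y \<in> K \<inter> units r"
      by (simp add: singleton_Delta_K_iff units_def)
    moreover have "y = m y (s y)" "s y = r (s y)"
      by simp_all
    ultimately show "y \<in> {m g c |g c. c \<in> K \<inter> units r \<and> s g = r c}"
      by blast
  next
    fix y assume "y \<in> {m g c |g c. c \<in> K \<inter> units r \<and> s g = r c}"
    then obtain g c where gc: "y = m g c" "c \<in> K" "r c = c" "s g = r c"
      by (auto simp: units_def)
    then have "s y = c"
      by (metis s_mult s_r)
    with gc(2) show "y \<in> {y. {y} \<in> Delta_K r m i K}"
      by (simp add: singleton_Delta_K_iff)
  qed
qed

end

theorem proposition3p26:
  fixes s r :: "'g::t2_space \<Rightarrow> 'g" and m :: "'g \<Rightarrow> 'g \<Rightarrow> 'g" and i :: "'g \<Rightarrow> 'g"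
    and K :: "'g set"
  assumes "etale_groupoid s r m i" and "compact K"
  shows "G_simplicial_complex s r m i m r (Delta_K r m i K)
       \<and> finite_dimensional (Delta_K r m i K)
       \<and> H1 (Delta_K r m i K)
       \<and> H2 TYPE('i) (Delta_K r m i K)
       \<and> proper_action s m r
       \<and> G_compact s m r (Delta_K r m i K)"
proof -
  interpret etale s r m i
    by (rule etale.intro) (fact assms(1))
  show ?thesis
    using Delta_K_G_simplicial_complex Delta_K_finite_dimensional[OF assms(2)]
      Delta_K_H1[OF assms(2)] Delta_K_H2[OF compact_imp_closed[OF assms(2)]]
      proper_action_mult Delta_K_G_compact[OF assms(2)]
    by blast
qed

end
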